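(* Let $I=[a,b]$ and $u\in W^{2,\infty}(I)^2$ with $|u'|^2=1$ on $I$. Set $\lambda:=-|u''|^2$ and $G_u:=\{v\in H^2(I)^2: u'\cdot v'=0 \text{ on } I,\ v(a)=0,\ v'(a)=0\}$. Then there exists $\alpha>0$ such that $$a_\lambda(v,v)=\int_I |v''|^2+\lambda|v'|^2\,dx\ \ge\ \alpha\|v\|_{H^2(I)^2}^2\quad\text{for all }v\in G_u.$$
   Context: $a_\lambda(v,w)=\int_I v''\cdot w''+\lambda\,v'\cdot w'\,dx$. *)

theory Defs
  imports "HOL-Analysis.Analysis"
begin

text \<open>One-dimensional Sobolev functions on I = [a,b] are represented by their
  (absolutely) continuous representative together with their (weak) derivatives.
  \<open>ac_with_deriv a b f g\<close>: g is integrable on [a,b] and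
  f x = f a + int_a^x g for all x in [a,b], i.e. f is absolutely continuous on [a,b]
  with derivative g (almost everywhere), which is the weak derivative of f.\<close>
definition ac_with_deriv ::
  "real \<Rightarrow> real \<Rightarrow> (real \<Rightarrow> 'a::{banach,second_countable_topology}) \<Rightarrow> (real \<Rightarrow> 'a) \<Rightarrow> bool" where
  "ac_with_deriv a b f g \<longleftrightarrow>
     set_integrable lborel {a..b} g \<and>
     (\<forall>x\<in>{a..b}. f x = f a + (LINT t:{a..x}|lborel. g t))"

definition H2_with_derivs ::
  "real \<Rightarrow> real \<Rightarrow> (real \<Rightarrow> real^2) \<Rightarrow> (real \<Rightarrow> real^2) \<Rightarrow> (real \<Rightarrow> real^2) \<Rightarrow> bool" where
  "H2_with_derivs a b v v1 v2 \<longleftrightarrow>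
     ac_with_deriv a b v v1 \<and> ac_with_deriv a b v1 v2 \<and>
     set_integrable lborel {a..b} (\<lambda>x. (norm (v2 x))\<^sup>2)"

definition W2inf_with_derivs ::
  "real \<Rightarrow> real \<Rightarrow> (real \<Rightarrow> real^2) \<Rightarrow> (real \<Rightarrow> real^2) \<Rightarrow> (real \<Rightarrow> real^2) \<Rightarrow> bool" where
  "W2inf_with_derivs a b u u1 u2 \<longleftrightarrow>
     ac_with_deriv a b u u1 \<and> ac_with_deriv a b u1 u2 \<and>
     (\<exists>C. AE x in lborel. x \<in> {a..b} \<longrightarrow> norm (u2 x) \<le> C)"

definition H2_norm_sq ::
  "real \<Rightarrow> real \<Rightarrow> (real \<Rightarrow> real^2) \<Rightarrow> (real \<Rightarrow> real^2) \<Rightarrow> (real \<Rightarrow> real^2) \<Rightarrow> real" where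
  "H2_norm_sq a b v v1 v2 =
     (LINT x:{a..b}|lborel. (norm (v x))\<^sup>2 + (norm (v1 x))\<^sup>2 + (norm (v2 x))\<^sup>2)"

definition a_form ::
  "real \<Rightarrow> real \<Rightarrow> (real \<Rightarrow> real) \<Rightarrow> (real \<Rightarrow> real^2) \<Rightarrow> (real \<Rightarrow> real^2)
     \<Rightarrow> (real \<Rightarrow> real^2) \<Rightarrow> (real \<Rightarrow> real^2) \<Rightarrow> real" where
  "a_form a b lam v1 v2 w1 w2 =
     (LINT x:{a..b}|lborel. v2 x \<bullet> w2 x + lam x * (v1 x \<bullet> w1 x))"

end

theory Submission
  imports Defs
begin

text \<open>Since \<open>|u'| = 1\<close> and \<open>u' \<cdot> v' = 0\<close>, we can write \<open>v' = \<phi> J u'\<close> with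
  \<open>\<phi> = det (u', v')\<close> and \<open>J\<close> the rotation by \<open>\<pi>/2\<close>. Differentiating \<open>|u'|\<^sup>2 = 1\<close> shows
  that \<open>u''\<close> is parallel to \<open>J u'\<close>, so \<open>v'' = \<phi>' J u' + \<phi> J u''\<close> is an orthogonal
  decomposition and \<open>|v''|\<^sup>2 = \<phi>'\<^sup>2 + |u''|\<^sup>2 |v'|\<^sup>2\<close>. Hence \<open>a\<^sub>\<lambda>(v, v) = \<integral> \<phi>'\<^sup>2\<close>.
  As \<open>\<phi>(a) = 0\<close>, Cauchy-Schwarz bounds \<open>|v'|\<^sup>2 = \<phi>\<^sup>2\<close> pointwise by \<open>(b - a) \<integral> \<phi>'\<^sup>2\<close>;
  integrating \<open>v'\<close> from \<open>v(a) = 0\<close> bounds \<open>|v|\<^sup>2\<close>, and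
  \<open>|v''|\<^sup>2 \<le> \<phi>'\<^sup>2 + \<parallel>u''\<parallel>\<^sub>\<infinity>\<^sup>2 |v'|\<^sup>2\<close> bounds the rest of the \<open>H\<^sup>2\<close> norm.\<close>

lemma ac_with_deriv_set_integrable:
  "ac_with_deriv a b f g \<Longrightarrow> set_integrable lborel {a..b} g"
  unfolding ac_with_deriv_def by blast

lemma ac_with_deriv_eq:
  "ac_with_deriv a b f g \<Longrightarrow> x \<in> {a..b} \<Longrightarrow> f x = f a + (LINT t:{a..x}|lborel. g t)"
  unfolding ac_with_deriv_def by blast

lemma set_integrable_subinterval:
  fixes f :: "real \<Rightarrow> 'a::{banach,second_countable_topology}"
  assumes "set_integrable lborel {a..b} f" "a \<le> c" "d \<le> b"
  shows "set_integrable lborel {c..d} f"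
  by (rule set_integrable_subset[OF assms(1)]) (use assms in auto)

lemma ac_with_deriv_integral:
  fixes f g :: "real \<Rightarrow> 'a::euclidean_space"
  assumes ac: "ac_with_deriv a b f g" and "a \<le> x" "x \<le> y" "y \<le> b"
  shows "integral {x..y} g = f y - f x"
proof -
  have g: "set_integrable lborel {a..b} g"
    using ac by (rule ac_with_deriv_set_integrable)
  have f: "f t = f a + integral {a..t} g" if "a \<le> t" "t \<le> b" for t
    using ac_with_deriv_eq[OF ac, of t] set_borel_integral_eq_integral(2)[OF set_integrable_subinterval[OF g]] that
    by simp
  have "g integrable_on {a..y}"
    by (rule set_borel_integral_eq_integral(1)[OF set_integrable_subinterval[OF g]]) (use assms in auto)
  then have "integral {a..x} g + integral {x..y} g = integral {a..y} g"
    by (rule Henstock_Kurzweil_Integration.integral_combine[rotated 2]) (use assms in auto)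
  then show ?thesis
    using assms f[of x] f[of y] by (simp add: algebra_simps)
qed

lemma ac_with_deriv_continuous_on:
  fixes f g :: "real \<Rightarrow> 'a::euclidean_space"
  assumes "ac_with_deriv a b f g"
  shows "continuous_on {a..b} f"
proof -
  have "continuous_on {a..b} (\<lambda>x. f a + integral {a..x} g)"
    by (intro continuous_intros indefinite_integral_continuous_1 set_borel_integral_eq_integral(1)
        ac_with_deriv_set_integrable[OF assms])
  then show ?thesis
    by (rule continuous_on_eq) (use ac_with_deriv_integral[OF assms, of a] in auto)
qed

lemma ac_with_deriv_AE_deriv_eq_0:
  fixes F G :: "real \<Rightarrow> 'a::euclidean_space"
  assumes ac: "ac_with_deriv a b F G" and const: "\<forall>x\<in>{a..b}. F x = c"
  shows "AE x in lborel. x \<in> {a..b} \<longrightarrow> G x = 0"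
proof -
  define f where "f = (\<lambda>t. indicator {a..b} t *\<^sub>R G t)"
  have "integrable lborel f"
    using ac_with_deriv_set_integrable[OF ac] unfolding set_integrable_def f_def .
  then have "f integrable_on UNIV"
    using has_integral_integral_lborel integrable_on_def by blast
  then have "\<And>c d. f integrable_on cbox c d"
    by (rule integrable_on_subcbox) auto
  \<comment> \<open>Lebesgue differentiation: off a null set, f is the limit of its averages over [x, x + h].\<close>
  then obtain N where "negligible N" and N: "\<And>x e. \<lbrakk>x \<notin> N; 0 < e\<rbrakk> \<Longrightarrow>
      \<exists>d>0. \<forall>h. 0 < h \<and> h < d \<longrightarrow>
        norm (integral (cbox x (x + h *\<^sub>R One)) f /\<^sub>R h ^ DIM(real) - f x) < e"
    using integrable_ccontinuous_explicit by blast
  have "G x = 0" if x: "x \<in> {a<..<b}" "x \<notin> N" for x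
  proof -
    have "norm (G x) < e" if e: "e > 0" for e
    proof -
      obtain d where "d > 0" and d: "\<And>h. 0 < h \<and> h < d \<longrightarrow>
          norm (integral (cbox x (x + h *\<^sub>R One)) f /\<^sub>R h ^ DIM(real) - f x) < e"
        using N[OF x(2) e] by blast
      define h where "h = min d (b - x) / 2"
      have h: "0 < h" "h < d" "x + h \<le> b"
        using \<open>d > 0\<close> x unfolding h_def by (auto simp: min_def field_simps)
      have "integral {x..x + h} f = integral {x..x + h} G"
        by (rule integral_cong) (use x h in \<open>auto simp: f_def\<close>)
      also have "\<dots> = F (x + h) - F x"
        by (rule ac_with_deriv_integral[OF ac]) (use x h in auto)
      also have "\<dots> = 0"
        using const x h by auto
      finally have "integral (cbox x (x + h *\<^sub>R One)) f = 0"
        by (simp add: cbox_interval)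
      then show ?thesis
        using d[of h] h x by (simp add: f_def)
    qed
    then show ?thesis
      by (metis less_irrefl norm_eq_zero norm_ge_zero order_le_less)
  qed
  then have "AE x in lebesgue. x \<in> {a..b} \<longrightarrow> G x = 0"
    unfolding eventually_ae_filter_negligible
    using \<open>negligible N\<close> by (intro exI[of _ "insert a (insert b N)"]) fastforce
  then show ?thesis
    by (simp add: AE_completion_iff)
qed

lemma ac_with_deriv_AE_cong:
  fixes f g g' :: "real \<Rightarrow> 'a::{banach,second_countable_topology}"
  assumes ac: "ac_with_deriv a b f g" and g': "set_integrable lborel {a..b} g'"
    and ae: "AE x in lborel. x \<in> {a..b} \<longrightarrow> g x = g' x"
  shows "ac_with_deriv a b f g'"
proof -
  have "f x = f a + (LINT t:{a..x}|lborel. g' t)" if x: "x \<in> {a..b}" for x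
  proof -
    have "integrable lborel (\<lambda>t. indicator {a..x} t *\<^sub>R g t)"
      "integrable lborel (\<lambda>t. indicator {a..x} t *\<^sub>R g' t)"
      using set_integrable_subinterval[OF ac_with_deriv_set_integrable[OF ac]]
        set_integrable_subinterval[OF g'] x
      unfolding set_integrable_def by auto
    moreover have "AE t in lborel. indicator {a..x} t *\<^sub>R g t = indicator {a..x} t *\<^sub>R g' t"
      using ae by eventually_elim (use x in \<open>auto simp: indicator_def\<close>)
    ultimately have "(LINT t:{a..x}|lborel. g t) = (LINT t:{a..x}|lborel. g' t)"
      unfolding set_lebesgue_integral_def by (intro integral_cong_AE) auto
    then show ?thesis
      using ac_with_deriv_eq[OF ac x] by simp
  qed
  with g' show ?thesis
    unfolding ac_with_deriv_def by blast
qed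

lemma ac_with_deriv_add:
  fixes f g h k :: "real \<Rightarrow> 'a::{banach,second_countable_topology}"
  assumes f: "ac_with_deriv a b f g" and h: "ac_with_deriv a b h k"
  shows "ac_with_deriv a b (\<lambda>x. f x + h x) (\<lambda>x. g x + k x)"
proof -
  note g = ac_with_deriv_set_integrable[OF f] and k = ac_with_deriv_set_integrable[OF h]
  have "f x + h x = (f a + h a) + (LINT t:{a..x}|lborel. g t + k t)" if x: "x \<in> {a..b}" for x
  proof -
    have "(LINT t:{a..x}|lborel. g t + k t) = (LINT t:{a..x}|lborel. g t) + (LINT t:{a..x}|lborel. k t)"
      using x set_integrable_subinterval[OF g] set_integrable_subinterval[OF k]
      by (intro set_integral_add(2)) auto
    then show ?thesis
      using ac_with_deriv_eq[OF f x] ac_with_deriv_eq[OF h x] by (simp add: algebra_simps)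
  qed
  with set_integral_add(1)[OF g k] show ?thesis
    unfolding ac_with_deriv_def by blast
qed

lemma ac_with_deriv_diff:
  fixes f g h k :: "real \<Rightarrow> 'a::{banach,second_countable_topology}"
  assumes f: "ac_with_deriv a b f g" and h: "ac_with_deriv a b h k"
  shows "ac_with_deriv a b (\<lambda>x. f x - h x) (\<lambda>x. g x - k x)"
proof -
  note g = ac_with_deriv_set_integrable[OF f] and k = ac_with_deriv_set_integrable[OF h]
  have "f x - h x = (f a - h a) + (LINT t:{a..x}|lborel. g t - k t)" if x: "x \<in> {a..b}" for x
  proof -
    have "(LINT t:{a..x}|lborel. g t - k t) = (LINT t:{a..x}|lborel. g t) - (LINT t:{a..x}|lborel. k t)"
      using x set_integrable_subinterval[OF g] set_integrable_subinterval[OF k]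
      by (intro set_integral_diff(2)) auto
    then show ?thesis
      using ac_with_deriv_eq[OF f x] ac_with_deriv_eq[OF h x] by (simp add: algebra_simps)
  qed
  with set_integral_diff(1)[OF g k] show ?thesis
    unfolding ac_with_deriv_def by blast
qed

lemma set_integrable_mult_continuous_on:
  fixes g H :: "real \<Rightarrow> real"
  assumes g: "set_integrable lborel {a..b} g" and H: "continuous_on {a..b} H"
  shows "set_integrable lborel {a..b} (\<lambda>t. g t * H t)"
proof -
  obtain B where B: "\<And>t. t \<in> {a..b} \<Longrightarrow> norm (H t) \<le> B"
    using compact_imp_bounded[OF compact_continuous_image[OF H compact_Icc]]
    unfolding bounded_iff by blast
  have "(\<lambda>t. (indicator {a..b} t *\<^sub>R g t) * (indicator {a..b} t *\<^sub>R H t)) \<in> borel_measurable lborel"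
    using borel_measurable_integrable[OF g[unfolded set_integrable_def]]
      borel_measurable_continuous_on_indicator[OF _ H] by measurable
  moreover have "(\<lambda>t. (indicator {a..b} t *\<^sub>R g t) * (indicator {a..b} t *\<^sub>R H t))
      = (\<lambda>t. indicator {a..b} t *\<^sub>R (g t * H t))"
    by (auto simp: indicator_def)
  ultimately have "set_borel_measurable lborel {a..b} (\<lambda>t. g t * H t)"
    unfolding set_borel_measurable_def by simp
  moreover have "norm (g t * H t) \<le> norm (B * g t)" if "t \<in> {a..b}" for t
  proof -
    have "\<bar>g t * H t\<bar> \<le> \<bar>g t\<bar> * B"
      using B[OF that] by (simp add: abs_mult mult_left_mono)
    also have "\<dots> \<le> \<bar>B * g t\<bar>"
      by (simp add: abs_mult mult.commute mult_right_mono)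
    finally show ?thesis by simp
  qed
  ultimately show ?thesis
    by (intro set_integrable_bound[OF set_integrable_mult_right[OF g, of B]]) auto
qed

lemma integrable_triangle_product:
  fixes g k :: "real \<Rightarrow> real" and a x :: real
  assumes g: "integrable lborel g" and k: "integrable lborel k"
  defines "\<Phi> \<equiv> \<lambda>s t. if a \<le> s \<and> s \<le> t \<and> t \<le> x then g t * k s else 0"
  shows "integrable (lborel \<Otimes>\<^sub>M lborel) (case_prod \<Phi>)"
proof (rule lborel_pair.Fubini_integrable)
  have [measurable]: "g \<in> borel_measurable lborel" "k \<in> borel_measurable lborel"
    using g k by auto
  show \<Phi>_measurable[measurable]: "case_prod \<Phi> \<in> borel_measurable (lborel \<Otimes>\<^sub>M lborel)"
    unfolding \<Phi>_def by measurable
  have \<Phi>_section: "integrable lborel (\<lambda>t. \<Phi> s t)" for s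
  proof (rule Bochner_Integration.integrable_bound[where f="\<lambda>t. k s * g t"])
    show "integrable lborel (\<lambda>t. k s * g t)"
      using g by simp
    show "(\<lambda>t. \<Phi> s t) \<in> borel_measurable lborel"
      unfolding \<Phi>_def by measurable
    show "AE t in lborel. norm (\<Phi> s t) \<le> norm (k s * g t)"
      by (intro AE_I2) (auto simp: \<Phi>_def abs_mult)
  qed
  then show "AE s in lborel. integrable lborel (\<lambda>t. case (s, t) of (s, t) \<Rightarrow> \<Phi> s t)"
    by simp
  show "integrable lborel (\<lambda>s. \<integral>t. norm (case (s, t) of (s, t) \<Rightarrow> \<Phi> s t) \<partial>lborel)"
  proof (rule Bochner_Integration.integrable_bound[where f="\<lambda>s. k s * (\<integral>t. norm (g t) \<partial>lborel)"])
    show "integrable lborel (\<lambda>s. k s * (\<integral>t. norm (g t) \<partial>lborel))"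
      using k by simp
    have "(\<lambda>p. norm (case_prod \<Phi> p)) \<in> borel_measurable (lborel \<Otimes>\<^sub>M lborel)"
      by measurable
    then show "(\<lambda>s. \<integral>t. norm (case (s, t) of (s, t) \<Rightarrow> \<Phi> s t) \<partial>lborel) \<in> borel_measurable lborel"
      using lborel_pair.borel_measurable_lebesgue_integral by simp
    have "norm (\<integral>t. norm (\<Phi> s t) \<partial>lborel) \<le> norm (k s * (\<integral>t. norm (g t) \<partial>lborel))" for s
    proof -
      have "norm (\<integral>t. norm (\<Phi> s t) \<partial>lborel) = (\<integral>t. norm (\<Phi> s t) \<partial>lborel)"
        by (simp add: integral_nonneg_AE)
      also have "\<dots> \<le> (\<integral>t. norm (k s) * norm (g t) \<partial>lborel)"
        by (intro Bochner_Integration.integral_mono \<Phi>_section integrable_norm)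
          (use g in \<open>auto simp: \<Phi>_def abs_mult\<close>)
      also have "\<dots> = norm (k s * (\<integral>t. norm (g t) \<partial>lborel))"
        by (simp add: abs_mult integral_nonneg_AE)
      finally show ?thesis .
    qed
    then show "AE s in lborel. norm (\<integral>t. norm (case (s, t) of (s, t) \<Rightarrow> \<Phi> s t) \<partial>lborel)
        \<le> norm (k s * (\<integral>t. norm (g t) \<partial>lborel))"
      by simp
  qed
qed

lemma integral_triangle_swap:
  fixes g k :: "real \<Rightarrow> real"
  assumes g: "integrable lborel g" and k: "integrable lborel k"
  shows "(\<integral>t. indicator {a..x} t * g t * (\<integral>s. indicator {a..t} s * k s \<partial>lborel) \<partial>lborel)
       = (\<integral>s. indicator {a..x} s * k s * (\<integral>t. indicator {s..x} t * g t \<partial>lborel) \<partial>lborel)"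
proof -
  define \<Phi> where "\<Phi> = (\<lambda>s t. if a \<le> s \<and> s \<le> t \<and> t \<le> x then g t * k s else (0::real))"
  have Fubini: "(\<integral>t. (\<integral>s. \<Phi> s t \<partial>lborel) \<partial>lborel) = (\<integral>s. (\<integral>t. \<Phi> s t \<partial>lborel) \<partial>lborel)"
    by (rule lborel_pair.Fubini_integral[OF integrable_triangle_product[OF g k, of a x, folded \<Phi>_def]])
  have inner_s: "(\<integral>s. \<Phi> s t \<partial>lborel) = indicator {a..x} t * g t * (\<integral>s. indicator {a..t} s * k s \<partial>lborel)" for t
  proof -
    have "(\<integral>s. \<Phi> s t \<partial>lborel) = (\<integral>s. (indicator {a..x} t * g t) * (indicator {a..t} s * k s) \<partial>lborel)"
      by (rule Bochner_Integration.integral_cong) (auto simp: \<Phi>_def indicator_def)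
    then show ?thesis
      by simp
  qed
  have inner_t: "(\<integral>t. \<Phi> s t \<partial>lborel) = indicator {a..x} s * k s * (\<integral>t. indicator {s..x} t * g t \<partial>lborel)" for s
  proof -
    have "(\<integral>t. \<Phi> s t \<partial>lborel) = (\<integral>t. (indicator {a..x} s * k s) * (indicator {s..x} t * g t) \<partial>lborel)"
      by (rule Bochner_Integration.integral_cong) (auto simp: \<Phi>_def indicator_def)
    then show ?thesis
      by simp
  qed
  show ?thesis
    using Fubini unfolding inner_s inner_t .
qed

lemma ac_with_deriv_lborel_integral:
  fixes F g :: "real \<Rightarrow> real"
  assumes ac: "ac_with_deriv a b F g" and "a \<le> s" "s \<le> t" "t \<le> b"
  shows "(\<integral>r. indicator {s..t} r * (indicator {a..b} r * g r) \<partial>lborel) = F t - F s"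
proof -
  have "(\<integral>r. indicator {s..t} r * (indicator {a..b} r * g r) \<partial>lborel) = (LINT r:{s..t}|lborel. g r)"
    unfolding set_lebesgue_integral_def
    by (rule Bochner_Integration.integral_cong[OF refl]) (use assms in \<open>auto simp: indicator_def\<close>)
  also have "\<dots> = integral {s..t} g"
    by (rule set_borel_integral_eq_integral(2)[OF set_integrable_subinterval[OF ac_with_deriv_set_integrable[OF ac]]])
      (use assms in auto)
  also have "\<dots> = F t - F s"
    by (rule ac_with_deriv_integral[OF ac]) (use assms in auto)
  finally show ?thesis .
qed

lemma ac_with_deriv_integral_swap:
  fixes F g H k :: "real \<Rightarrow> real"
  assumes F: "ac_with_deriv a b F g" and H: "ac_with_deriv a b H k" and x: "a \<le> x" "x \<le> b"
  shows "integral {a..x} (\<lambda>t. g t * (H t - H a)) = integral {a..x} (\<lambda>s. k s * (F x - F s))"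
proof -
  note g = ac_with_deriv_set_integrable[OF F] and k = ac_with_deriv_set_integrable[OF H]
  define G0 where "G0 = (\<lambda>t. indicator {a..b} t * g t)"
  define K0 where "K0 = (\<lambda>t. indicator {a..b} t * k t)"
  have G0: "integrable lborel G0" and K0: "integrable lborel K0"
    using g k unfolding set_integrable_def G0_def K0_def by simp_all
  have K0_integral: "(\<integral>s. indicator {a..t} s * K0 s \<partial>lborel) = H t - H a" if "t \<in> {a..x}" for t
    unfolding K0_def by (rule ac_with_deriv_lborel_integral[OF H]) (use that x in auto)
  have G0_integral: "(\<integral>t. indicator {s..x} t * G0 t \<partial>lborel) = F x - F s" if "s \<in> {a..x}" for s
    unfolding G0_def by (rule ac_with_deriv_lborel_integral[OF F]) (use that x in auto)
  have "set_integrable lborel {a..x} (\<lambda>t. g t * (H t - H a))"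
    by (rule set_integrable_subinterval[OF set_integrable_mult_continuous_on[OF g]])
      (use x ac_with_deriv_continuous_on[OF H] in \<open>auto intro!: continuous_intros\<close>)
  then have "integral {a..x} (\<lambda>t. g t * (H t - H a)) = (LINT t:{a..x}|lborel. g t * (H t - H a))"
    by (rule set_borel_integral_eq_integral(2)[symmetric])
  also have "\<dots> = (\<integral>t. indicator {a..x} t * G0 t * (\<integral>s. indicator {a..t} s * K0 s \<partial>lborel) \<partial>lborel)"
    unfolding set_lebesgue_integral_def
  proof (rule Bochner_Integration.integral_cong[OF refl])
    fix t
    show "indicator {a..x} t *\<^sub>R (g t * (H t - H a))
        = indicator {a..x} t * G0 t * (\<integral>s. indicator {a..t} s * K0 s \<partial>lborel)"
      using K0_integral[of t] x by (cases "t \<in> {a..x}") (auto simp: G0_def)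
  qed
  also have "\<dots> = (\<integral>s. indicator {a..x} s * K0 s * (\<integral>t. indicator {s..x} t * G0 t \<partial>lborel) \<partial>lborel)"
    by (rule integral_triangle_swap[OF G0 K0])
  also have "\<dots> = (LINT s:{a..x}|lborel. k s * (F x - F s))"
    unfolding set_lebesgue_integral_def
  proof (rule Bochner_Integration.integral_cong[OF refl])
    fix s
    show "indicator {a..x} s * K0 s * (\<integral>t. indicator {s..x} t * G0 t \<partial>lborel)
        = indicator {a..x} s *\<^sub>R (k s * (F x - F s))"
      using G0_integral[of s] x by (cases "s \<in> {a..x}") (auto simp: K0_def)
  qed
  also have "\<dots> = integral {a..x} (\<lambda>s. k s * (F x - F s))"
    by (rule set_borel_integral_eq_integral(2)[OF set_integrable_subinterval[OF set_integrable_mult_continuous_on[OF k]]])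
      (use x ac_with_deriv_continuous_on[OF F] in \<open>auto intro!: continuous_intros\<close>)
  finally show ?thesis .
qed

lemma ac_with_deriv_mult:
  fixes F g H k :: "real \<Rightarrow> real"
  assumes F: "ac_with_deriv a b F g" and H: "ac_with_deriv a b H k"
  shows "ac_with_deriv a b (\<lambda>x. F x * H x) (\<lambda>x. g x * H x + F x * k x)"
proof -
  note g = ac_with_deriv_set_integrable[OF F] and k = ac_with_deriv_set_integrable[OF H]
  have gH: "set_integrable lborel {a..b} (\<lambda>t. g t * H t)"
    by (rule set_integrable_mult_continuous_on[OF g ac_with_deriv_continuous_on[OF H]])
  have Fk: "set_integrable lborel {a..b} (\<lambda>t. F t * k t)"
    using set_integrable_mult_continuous_on[OF k ac_with_deriv_continuous_on[OF F]]
    by (simp add: mult.commute)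
  have "F x * H x = F a * H a + (LINT t:{a..x}|lborel. g t * H t + F t * k t)" if x: "x \<in> {a..b}" for x
  proof -
    have int: "f integrable_on {a..x}" if "set_integrable lborel {a..b} f" for f :: "real \<Rightarrow> real"
      by (rule set_borel_integral_eq_integral(1)[OF set_integrable_subinterval[OF that]]) (use x in auto)
    have "(LINT t:{a..x}|lborel. g t * H t + F t * k t)
        = integral {a..x} (\<lambda>t. g t * H t) + integral {a..x} (\<lambda>t. F t * k t)"
      using set_borel_integral_eq_integral(2)[OF set_integrable_subinterval[OF set_integral_add(1)[OF gH Fk]]]
        integral_add[OF int[OF gH] int[OF Fk]] x
      by simp
    moreover have "integral {a..x} (\<lambda>t. g t * (H t - H a))
        = integral {a..x} (\<lambda>t. g t * H t) - integral {a..x} g * H a"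
      using integral_diff[OF int[OF gH] integrable_on_mult_left[OF int[OF g], of "H a"]]
      by (simp add: algebra_simps)
    moreover have "integral {a..x} (\<lambda>s. k s * (F x - F s))
        = integral {a..x} k * F x - integral {a..x} (\<lambda>t. F t * k t)"
      using integral_diff[OF integrable_on_mult_left[OF int[OF k], of "F x"] int[OF Fk]]
      by (simp add: algebra_simps)
    moreover have "integral {a..x} g = F x - F a" "integral {a..x} k = H x - H a"
      using x by (auto intro: ac_with_deriv_integral[OF F] ac_with_deriv_integral[OF H])
    ultimately show ?thesis
      using ac_with_deriv_integral_swap[OF F H] x by (simp add: algebra_simps)
  qed
  with set_integral_add(1)[OF gH Fk] show ?thesis
    unfolding ac_with_deriv_def by blast
qed

lemma ac_with_deriv_bounded_linear:
  fixes f g :: "real \<Rightarrow> 'a::euclidean_space" and T :: "'a \<Rightarrow> 'b::euclidean_space"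
  assumes T: "bounded_linear T" and ac: "ac_with_deriv a b f g"
  shows "ac_with_deriv a b (\<lambda>x. T (f x)) (\<lambda>x. T (g x))"
proof -
  have T_indicator: "T (indicator S x *\<^sub>R y) = indicator S x *\<^sub>R T y" for S x y
    using linear_scale[OF bounded_linear.linear[OF T]] by simp
  have set_integrable_T: "set_integrable lborel S (\<lambda>x. T (g x))" if "set_integrable lborel S g" for S
    using integrable_bounded_linear[OF T that[unfolded set_integrable_def]]
    unfolding set_integrable_def T_indicator .
  have "T (f x) = T (f a) + (LINT t:{a..x}|lborel. T (g t))" if x: "x \<in> {a..b}" for x
  proof -
    have "set_integrable lborel {a..x} g"
      by (rule set_integrable_subinterval[OF ac_with_deriv_set_integrable[OF ac]]) (use x in auto)
    then have "(LINT t:{a..x}|lborel. T (g t)) = T (LINT t:{a..x}|lborel. g t)"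
      using integral_bounded_linear[OF T, of lborel "\<lambda>t. indicator {a..x} t *\<^sub>R g t"]
      unfolding set_lebesgue_integral_def set_integrable_def T_indicator by simp
    then show ?thesis
      using ac_with_deriv_eq[OF ac x] linear_add[OF bounded_linear.linear[OF T]] by simp
  qed
  with set_integrable_T[OF ac_with_deriv_set_integrable[OF ac]] show ?thesis
    unfolding ac_with_deriv_def by blast
qed

lemma ac_with_deriv_power2_le:
  fixes \<phi> \<psi> :: "real \<Rightarrow> real"
  assumes ac: "ac_with_deriv a b \<phi> \<psi>" and \<phi>_a: "\<phi> a = 0"
    and \<psi>2: "set_integrable lborel {a..b} (\<lambda>t. (\<psi> t)\<^sup>2)" and x: "x \<in> {a..b}"
  shows "(\<phi> x)\<^sup>2 \<le> (b - a) * (LINT t:{a..b}|lborel. (\<psi> t)\<^sup>2)"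
proof -
  have ax: "a \<le> x" "x \<le> b"
    using x by auto
  have \<psi>: "\<psi> integrable_on {a..x}"
    by (rule set_borel_integral_eq_integral(1)[OF set_integrable_subinterval[OF ac_with_deriv_set_integrable[OF ac]]])
      (use ax in auto)
  have \<psi>2_ab: "(\<lambda>t. (\<psi> t)\<^sup>2) integrable_on {a..b}"
    by (rule set_borel_integral_eq_integral(1)[OF \<psi>2])
  have \<psi>2_ax: "(\<lambda>t. (\<psi> t)\<^sup>2) integrable_on {a..x}"
    by (rule set_borel_integral_eq_integral(1)[OF set_integrable_subinterval[OF \<psi>2]]) (use ax in auto)
  have \<phi>_x: "integral {a..x} \<psi> = \<phi> x"
    using ac_with_deriv_integral[OF ac, of a x] ax \<phi>_a by simp
  have "(\<phi> x)\<^sup>2 \<le> (x - a) * integral {a..x} (\<lambda>t. (\<psi> t)\<^sup>2)"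
  proof (cases "x = a")
    case True
    then show ?thesis
      using \<phi>_a by simp
  next
    case False
    then have "x - a > 0"
      using ax by auto
    define c where "c = \<phi> x / (x - a)"
    \<comment> \<open>Cauchy-Schwarz, by integrating \<open>2 c \<psi> - c\<^sup>2 \<le> \<psi>\<^sup>2\<close> over [a, x].\<close>
    have "integral {a..x} (\<lambda>t. \<psi> t * (2 * c) - c\<^sup>2) \<le> integral {a..x} (\<lambda>t. (\<psi> t)\<^sup>2)"
    proof (rule integral_le)
      show "(\<lambda>t. \<psi> t * (2 * c) - c\<^sup>2) integrable_on {a..x}"
        by (intro integrable_diff integrable_on_mult_left \<psi> integrable_const_ivl)
      show "\<psi> t * (2 * c) - c\<^sup>2 \<le> (\<psi> t)\<^sup>2" for t
        using zero_le_power2[of "\<psi> t - c"] unfolding power2_diff by (simp add: algebra_simps)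
    qed (fact \<psi>2_ax)
    moreover have "integral {a..x} (\<lambda>t. \<psi> t * (2 * c) - c\<^sup>2) = \<phi> x * (2 * c) - c\<^sup>2 * (x - a)"
      using integral_diff[OF integrable_on_mult_left[OF \<psi>] integrable_const_ivl] \<phi>_x ax by simp
    moreover have "y * (2 * (y / d)) - (y / d)\<^sup>2 * d = y\<^sup>2 / d" if "d \<noteq> 0" for y d :: real
      using that by (simp add: field_simps power2_eq_square)
    then have "\<phi> x * (2 * c) - c\<^sup>2 * (x - a) = (\<phi> x)\<^sup>2 / (x - a)"
      using \<open>x - a > 0\<close> unfolding c_def by simp
    ultimately have "(\<phi> x)\<^sup>2 / (x - a) \<le> integral {a..x} (\<lambda>t. (\<psi> t)\<^sup>2)"
      by simp
    then show ?thesis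
      using \<open>x - a > 0\<close> by (simp add: field_simps)
  qed
  also have "\<dots> \<le> (b - a) * integral {a..b} (\<lambda>t. (\<psi> t)\<^sup>2)"
    using ax integral_subset_le[OF _ \<psi>2_ax \<psi>2_ab] integral_nonneg[OF \<psi>2_ax]
    by (intro mult_mono) auto
  also have "\<dots> = (b - a) * (LINT t:{a..b}|lborel. (\<psi> t)\<^sup>2)"
    by (simp add: set_borel_integral_eq_integral(2)[OF \<psi>2])
  finally show ?thesis .
qed

lemma ac_with_deriv_norm_le:
  fixes f g :: "real \<Rightarrow> 'a::euclidean_space"
  assumes ac: "ac_with_deriv a b f g" and "f a = 0" and x: "x \<in> {a..b}"
    and M: "\<And>t. t \<in> {a..b} \<Longrightarrow> norm (g t) \<le> M"
  shows "norm (f x) \<le> (b - a) * M"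
proof -
  have ax: "a \<le> x" "x \<le> b"
    using x by auto
  have "g integrable_on {a..x}"
    by (rule set_borel_integral_eq_integral(1)[OF set_integrable_subinterval[OF ac_with_deriv_set_integrable[OF ac]]])
      (use ax in auto)
  then have "norm (integral {a..x} g) \<le> integral {a..x} (\<lambda>t. M)"
    by (rule integral_norm_bound_integral[OF _ integrable_const_ivl]) (use M ax in auto)
  moreover have "integral {a..x} g = f x"
    using ac_with_deriv_integral[OF ac, of a x] ax \<open>f a = 0\<close> by simp
  moreover have "0 \<le> M"
    using M[of a] ax by (meson atLeastAtMost_iff norm_ge_zero order_trans order_refl)
  ultimately show ?thesis
    using ax by (simp add: mult_right_mono order_trans)
qed

definition det2 :: "real^2 \<Rightarrow> real^2 \<Rightarrow> real" where
  "det2 x y = x$1 * y$2 - x$2 * y$1"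

lemma inner_vec2: "x \<bullet> y = x$1 * y$1 + x$2 * y$2"
  for x y :: "real^2"
  by (simp add: inner_vec_def sum_2)

lemma norm_vec2_power2: "(norm x)\<^sup>2 = (x$1)\<^sup>2 + (x$2)\<^sup>2"
  for x :: "real^2"
  unfolding power2_norm_eq_inner inner_vec2 by (simp add: power2_eq_square)

lemma inner_power2_add_det2_power2: "(x \<bullet> y)\<^sup>2 + (det2 x y)\<^sup>2 = (norm x)\<^sup>2 * (norm y)\<^sup>2"
  unfolding norm_vec2_power2 inner_vec2 det2_def by algebra

lemma det2_eq_0_if_orthogonal:
  assumes "e \<noteq> 0" "e \<bullet> y = 0" "e \<bullet> z = 0"
  shows "det2 y z = 0"
proof -
  have "e$1 * det2 y z = 0" "e$2 * det2 y z = 0"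
    using assms(2,3) unfolding inner_vec2 det2_def by algebra+
  moreover have "e$1 \<noteq> 0 \<or> e$2 \<noteq> 0"
    using assms(1) by (auto simp: vec_eq_iff forall_2)
  ultimately show ?thesis
    by auto
qed

lemma norm_power2_eq_det2_power2:
  assumes "(norm e)\<^sup>2 = 1" "e \<bullet> y = 0"
  shows "(norm y)\<^sup>2 = (det2 e y)\<^sup>2"
  using inner_power2_add_det2_power2[of e y] assms by simp

lemma norm_power2_eq_det2_power2_add:
  assumes unit: "(norm e)\<^sup>2 = 1" and "e \<bullet> y = 0" "e \<bullet> z = 0" "z \<bullet> y + e \<bullet> w = 0"
  shows "(norm w)\<^sup>2 = (det2 e w)\<^sup>2 + (norm z)\<^sup>2 * (norm y)\<^sup>2"
proof -
  have "e \<noteq> 0"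
    using unit by auto
  then have "det2 z y = 0"
    using assms by (intro det2_eq_0_if_orthogonal[of e]) auto
  then have "(z \<bullet> y)\<^sup>2 = (norm z)\<^sup>2 * (norm y)\<^sup>2"
    using inner_power2_add_det2_power2[of z y] by simp
  moreover have "(e \<bullet> w)\<^sup>2 = (z \<bullet> y)\<^sup>2"
    using assms(4) by (simp add: eq_neg_iff_add_eq_0[symmetric])
  ultimately show ?thesis
    using inner_power2_add_det2_power2[of e w] unit by simp
qed

lemma ac_with_deriv_vec_nth:
  fixes f g :: "real \<Rightarrow> real^'n"
  shows "ac_with_deriv a b f g \<Longrightarrow> ac_with_deriv a b (\<lambda>x. f x $ i) (\<lambda>x. g x $ i)"
  by (rule ac_with_deriv_bounded_linear[OF bounded_linear_vec_nth])

lemma ac_with_deriv_inner_vec2: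
  fixes f f' g g' :: "real \<Rightarrow> real^2"
  assumes "ac_with_deriv a b f f'" "ac_with_deriv a b g g'"
  shows "ac_with_deriv a b (\<lambda>x. f x \<bullet> g x) (\<lambda>x. f' x \<bullet> g x + f x \<bullet> g' x)"
proof -
  have "ac_with_deriv a b (\<lambda>x. f x $ 1 * g x $ 1 + f x $ 2 * g x $ 2)
      (\<lambda>x. (f' x $ 1 * g x $ 1 + f x $ 1 * g' x $ 1) + (f' x $ 2 * g x $ 2 + f x $ 2 * g' x $ 2))"
    using assms by (intro ac_with_deriv_add ac_with_deriv_mult ac_with_deriv_vec_nth)
  then show ?thesis
    unfolding inner_vec2 by (simp add: algebra_simps)
qed

lemma ac_with_deriv_det2:
  fixes f f' g g' :: "real \<Rightarrow> real^2"
  assumes "ac_with_deriv a b f f'" "ac_with_deriv a b g g'"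
  shows "ac_with_deriv a b (\<lambda>x. det2 (f x) (g x)) (\<lambda>x. det2 (f' x) (g x) + det2 (f x) (g' x))"
proof -
  have "ac_with_deriv a b (\<lambda>x. f x $ 1 * g x $ 2 - f x $ 2 * g x $ 1)
      (\<lambda>x. (f' x $ 1 * g x $ 2 + f x $ 1 * g' x $ 2) - (f' x $ 2 * g x $ 1 + f x $ 2 * g' x $ 1))"
    using assms by (intro ac_with_deriv_diff ac_with_deriv_mult ac_with_deriv_vec_nth)
  then show ?thesis
    unfolding det2_def by (simp add: algebra_simps)
qed

locale unit_speed_curve =
  fixes a b :: real and u u1 u2 :: "real \<Rightarrow> real^2"
  assumes a_lt_b: "a < b"
    and W2inf: "W2inf_with_derivs a b u u1 u2"
    and unit_speed: "\<forall>x\<in>{a..b}. (norm (u1 x))\<^sup>2 = 1"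
begin

lemma ac_u1: "ac_with_deriv a b u1 u2"
  using W2inf unfolding W2inf_with_derivs_def by blast

lemma AE_inner_u1_u2_eq_0: "AE x in lborel. x \<in> {a..b} \<longrightarrow> u1 x \<bullet> u2 x = 0"
proof -
  have "ac_with_deriv a b (\<lambda>x. u1 x \<bullet> u1 x) (\<lambda>x. u2 x \<bullet> u1 x + u1 x \<bullet> u2 x)"
    by (intro ac_with_deriv_inner_vec2 ac_u1)
  moreover have "\<forall>x\<in>{a..b}. u1 x \<bullet> u1 x = 1"
    using unit_speed by (simp add: dot_square_norm)
  ultimately have "AE x in lborel. x \<in> {a..b} \<longrightarrow> u2 x \<bullet> u1 x + u1 x \<bullet> u2 x = 0"
    by (rule ac_with_deriv_AE_deriv_eq_0)
  then show ?thesis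
    by eventually_elim (simp add: inner_commute)
qed

end

locale admissible_variation = unit_speed_curve +
  fixes v v1 v2 :: "real \<Rightarrow> real^2"
  assumes H2: "H2_with_derivs a b v v1 v2"
    and orthogonal: "\<forall>x\<in>{a..b}. u1 x \<bullet> v1 x = 0"
    and v_a: "v a = 0" and v1_a: "v1 a = 0"
begin

lemma ac_v: "ac_with_deriv a b v v1"
  and ac_v1: "ac_with_deriv a b v1 v2"
  and set_integrable_norm_v2: "set_integrable lborel {a..b} (\<lambda>x. (norm (v2 x))\<^sup>2)"
  using H2 unfolding H2_with_derivs_def by blast+

lemma AE_deriv_inner_u1_v1_eq_0: "AE x in lborel. x \<in> {a..b} \<longrightarrow> u2 x \<bullet> v1 x + u1 x \<bullet> v2 x = 0"
  using ac_with_deriv_AE_deriv_eq_0[OF ac_with_deriv_inner_vec2[OF ac_u1 ac_v1]] orthogonal by blast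

definition \<phi> :: "real \<Rightarrow> real" where
  "\<phi> = (\<lambda>x. det2 (u1 x) (v1 x))"

definition \<psi> :: "real \<Rightarrow> real" where
  "\<psi> = (\<lambda>x. det2 (u1 x) (v2 x))"

definition energy :: real where
  "energy = (LINT x:{a..b}|lborel. (\<psi> x)\<^sup>2)"

lemma \<phi>_a: "\<phi> a = 0"
  using v1_a by (simp add: \<phi>_def det2_def)

lemma norm_v1_power2: "x \<in> {a..b} \<Longrightarrow> (norm (v1 x))\<^sup>2 = (\<phi> x)\<^sup>2"
  unfolding \<phi>_def using unit_speed orthogonal by (intro norm_power2_eq_det2_power2) auto

lemma AE_norm_v2_power2:
  "AE x in lborel. x \<in> {a..b} \<longrightarrow> (norm (v2 x))\<^sup>2 = (\<psi> x)\<^sup>2 + (norm (u2 x))\<^sup>2 * (norm (v1 x))\<^sup>2"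
  using AE_inner_u1_u2_eq_0 AE_deriv_inner_u1_v1_eq_0
proof eventually_elim
  case (elim x)
  show ?case
  proof
    assume x: "x \<in> {a..b}"
    show "(norm (v2 x))\<^sup>2 = (\<psi> x)\<^sup>2 + (norm (u2 x))\<^sup>2 * (norm (v1 x))\<^sup>2"
      unfolding \<psi>_def
      by (rule norm_power2_eq_det2_power2_add) (use elim x unit_speed orthogonal in auto)
  qed
qed

lemma set_integrable_\<psi>: "set_integrable lborel {a..b} \<psi>"
proof -
  have "continuous_on {a..b} (\<lambda>x. u1 x $ i)" for i
    by (rule ac_with_deriv_continuous_on[OF ac_with_deriv_vec_nth[OF ac_u1]])
  moreover have "set_integrable lborel {a..b} (\<lambda>x. v2 x $ i)" for i
    by (rule ac_with_deriv_set_integrable[OF ac_with_deriv_vec_nth[OF ac_v1]])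
  ultimately have "set_integrable lborel {a..b} (\<lambda>x. v2 x $ 2 * u1 x $ 1 - v2 x $ 1 * u1 x $ 2)"
    by (intro set_integral_diff(1) set_integrable_mult_continuous_on)
  then show ?thesis
    unfolding \<psi>_def det2_def by (simp add: mult.commute)
qed

lemma ac_\<phi>: "ac_with_deriv a b \<phi> \<psi>"
proof (rule ac_with_deriv_AE_cong[OF _ set_integrable_\<psi>])
  show "ac_with_deriv a b \<phi> (\<lambda>x. det2 (u2 x) (v1 x) + det2 (u1 x) (v2 x))"
    unfolding \<phi>_def by (rule ac_with_deriv_det2[OF ac_u1 ac_v1])
  show "AE x in lborel. x \<in> {a..b} \<longrightarrow> det2 (u2 x) (v1 x) + det2 (u1 x) (v2 x) = \<psi> x"
    using AE_inner_u1_u2_eq_0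
  proof eventually_elim
    case (elim x)
    show ?case
    proof
      assume x: "x \<in> {a..b}"
      have "u1 x \<noteq> 0"
        using bspec[OF unit_speed x] by auto
      then have "det2 (u2 x) (v1 x) = 0"
        using elim x orthogonal by (intro det2_eq_0_if_orthogonal[of "u1 x"]) auto
      then show "det2 (u2 x) (v1 x) + det2 (u1 x) (v2 x) = \<psi> x"
        by (simp add: \<psi>_def)
    qed
  qed
qed

lemma set_integrable_\<psi>_power2: "set_integrable lborel {a..b} (\<lambda>x. (\<psi> x)\<^sup>2)"
proof (rule set_integrable_bound[OF set_integrable_norm_v2])
  have "(\<lambda>x. (indicator {a..b} x *\<^sub>R \<psi> x)\<^sup>2) \<in> borel_measurable lborel"
    using borel_measurable_integrable[OF set_integrable_\<psi>[unfolded set_integrable_def]] by measurable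
  moreover have "(\<lambda>x. (indicator {a..b} x *\<^sub>R \<psi> x)\<^sup>2) = (\<lambda>x. indicator {a..b} x *\<^sub>R (\<psi> x)\<^sup>2)"
    by (auto simp: indicator_def)
  ultimately show "set_borel_measurable lborel {a..b} (\<lambda>x. (\<psi> x)\<^sup>2)"
    unfolding set_borel_measurable_def by simp
  have "(\<psi> x)\<^sup>2 \<le> (norm (v2 x))\<^sup>2" if x: "x \<in> {a..b}" for x
  proof -
    have "(u1 x \<bullet> v2 x)\<^sup>2 + (\<psi> x)\<^sup>2 = (norm (v2 x))\<^sup>2"
      using inner_power2_add_det2_power2[of "u1 x" "v2 x"] unit_speed x by (simp add: \<psi>_def)
    then show ?thesis
      using zero_le_power2[of "u1 x \<bullet> v2 x"] by linarith
  qed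
  then show "AE x in lborel. x \<in> {a..b} \<longrightarrow> norm ((\<psi> x)\<^sup>2) \<le> norm ((norm (v2 x))\<^sup>2)"
    by (intro AE_I2) auto
qed

lemma energy_nonneg: "0 \<le> energy"
  unfolding energy_def set_lebesgue_integral_def
  by (intro integral_nonneg_AE) (auto simp: indicator_def)

lemma a_form_eq_energy: "a_form a b (\<lambda>x. - (norm (u2 x))\<^sup>2) v1 v2 v1 v2 = energy"
  unfolding a_form_def energy_def set_lebesgue_integral_def
proof (rule integral_cong_AE)
  have "(\<lambda>x. indicator {a..b} x *\<^sub>R v2 x) \<in> borel_measurable lborel"
    "(\<lambda>x. indicator {a..b} x *\<^sub>R u2 x) \<in> borel_measurable lborel"
    using ac_with_deriv_set_integrable[OF ac_v1] ac_with_deriv_set_integrable[OF ac_u1]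
    unfolding set_integrable_def by (blast intro: borel_measurable_integrable)+
  moreover have "(\<lambda>x. indicator {a..b} x *\<^sub>R v1 x) \<in> borel_measurable borel"
    by (rule borel_measurable_continuous_on_indicator[OF _ ac_with_deriv_continuous_on[OF ac_v1]]) auto
  ultimately have "(\<lambda>x. (indicator {a..b} x *\<^sub>R v2 x) \<bullet> (indicator {a..b} x *\<^sub>R v2 x)
      + - (norm (indicator {a..b} x *\<^sub>R u2 x))\<^sup>2 * ((indicator {a..b} x *\<^sub>R v1 x) \<bullet> (indicator {a..b} x *\<^sub>R v1 x)))
      \<in> borel_measurable lborel"
    by measurable
  moreover have "(\<lambda>x. (indicator {a..b} x *\<^sub>R v2 x) \<bullet> (indicator {a..b} x *\<^sub>R v2 x)
      + - (norm (indicator {a..b} x *\<^sub>R u2 x))\<^sup>2 * ((indicator {a..b} x *\<^sub>R v1 x) \<bullet> (indicator {a..b} x *\<^sub>R v1 x)))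
    = (\<lambda>x. indicator {a..b} x *\<^sub>R (v2 x \<bullet> v2 x + - (norm (u2 x))\<^sup>2 * (v1 x \<bullet> v1 x)))"
    by (auto simp: indicator_def)
  ultimately show "(\<lambda>x. indicator {a..b} x *\<^sub>R (v2 x \<bullet> v2 x + - (norm (u2 x))\<^sup>2 * (v1 x \<bullet> v1 x)))
      \<in> borel_measurable lborel"
    by simp
  show "(\<lambda>x. indicator {a..b} x *\<^sub>R (\<psi> x)\<^sup>2) \<in> borel_measurable lborel"
    using set_integrable_\<psi>_power2 unfolding set_integrable_def by (rule borel_measurable_integrable)
  show "AE x in lborel. indicator {a..b} x *\<^sub>R (v2 x \<bullet> v2 x + - (norm (u2 x))\<^sup>2 * (v1 x \<bullet> v1 x))
      = indicator {a..b} x *\<^sub>R (\<psi> x)\<^sup>2"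
    using AE_norm_v2_power2 by eventually_elim (auto simp: dot_square_norm indicator_def)
qed

lemma norm_v1_power2_le: "x \<in> {a..b} \<Longrightarrow> (norm (v1 x))\<^sup>2 \<le> (b - a) * energy"
  using ac_with_deriv_power2_le[OF ac_\<phi> \<phi>_a set_integrable_\<psi>_power2] norm_v1_power2
  unfolding energy_def by simp

lemma norm_v_power2_le:
  assumes x: "x \<in> {a..b}"
  shows "(norm (v x))\<^sup>2 \<le> (b - a)^3 * energy"
proof -
  define M where "M = sqrt ((b - a) * energy)"
  have "norm (v1 t) \<le> M" if "t \<in> {a..b}" for t
    unfolding M_def by (rule real_le_rsqrt[OF norm_v1_power2_le[OF that]])
  then have "norm (v x) \<le> (b - a) * M"
    by (rule ac_with_deriv_norm_le[OF ac_v v_a x])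
  then have "(norm (v x))\<^sup>2 \<le> ((b - a) * M)\<^sup>2"
    by (intro power_mono) auto
  also have "\<dots> = (b - a)^3 * energy"
    using a_lt_b energy_nonneg
    by (simp add: M_def power_mult_distrib power3_eq_cube power2_eq_square[of "b - a"])
  finally show ?thesis .
qed

lemma H2_norm_sq_le:
  assumes C: "AE x in lborel. x \<in> {a..b} \<longrightarrow> norm (u2 x) \<le> C"
  shows "H2_norm_sq a b v v1 v2 \<le> (1 + (b - a)\<^sup>2 * ((b - a)\<^sup>2 + 1 + C\<^sup>2)) * energy"
proof -
  define c where "c = ((b - a)^3 + (b - a) + C\<^sup>2 * (b - a)) * energy"
  have "AE x in lborel. x \<in> {a..b} \<longrightarrow>
      (norm (v x))\<^sup>2 + (norm (v1 x))\<^sup>2 + (norm (v2 x))\<^sup>2 \<le> (\<psi> x)\<^sup>2 + c"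
    using AE_norm_v2_power2 C
  proof eventually_elim
    case (elim x)
    show ?case
    proof
      assume x: "x \<in> {a..b}"
      have "(norm (u2 x))\<^sup>2 * (norm (v1 x))\<^sup>2 \<le> C\<^sup>2 * ((b - a) * energy)"
        using elim x norm_v1_power2_le[OF x] by (intro mult_mono power_mono) auto
      then show "(norm (v x))\<^sup>2 + (norm (v1 x))\<^sup>2 + (norm (v2 x))\<^sup>2 \<le> (\<psi> x)\<^sup>2 + c"
        using elim x norm_v_power2_le[OF x] norm_v1_power2_le[OF x]
        unfolding c_def by (simp add: algebra_simps)
    qed
  qed
  moreover have "set_integrable lborel {a..b} (\<lambda>x. (norm (v x))\<^sup>2 + (norm (v1 x))\<^sup>2 + (norm (v2 x))\<^sup>2)"
    using ac_with_deriv_continuous_on[OF ac_v] ac_with_deriv_continuous_on[OF ac_v1]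
    by (intro set_integral_add(1) set_integrable_norm_v2 borel_integrable_atLeastAtMost' continuous_intros)
  moreover have "set_integrable lborel {a..b} (\<lambda>x. (\<psi> x)\<^sup>2 + c)"
    by (intro set_integral_add(1) set_integrable_\<psi>_power2 borel_integrable_atLeastAtMost' continuous_intros)
  ultimately have "H2_norm_sq a b v v1 v2 \<le> (LINT x:{a..b}|lborel. (\<psi> x)\<^sup>2 + c)"
    unfolding H2_norm_sq_def by (intro set_integral_mono_AE) auto
  also have "\<dots> = energy + (b - a) * c"
  proof -
    have c: "set_integrable lborel {a..b} (\<lambda>x. c)"
      by (intro borel_integrable_atLeastAtMost' continuous_on_const)
    have "(LINT x:{a..b}|lborel. c) = (b - a) * c"
      using set_borel_integral_eq_integral(2)[OF c] a_lt_b by simp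
    then show ?thesis
      unfolding energy_def using set_integral_add(2)[OF set_integrable_\<psi>_power2 c] by simp
  qed
  also have "\<dots> = (1 + (b - a)\<^sup>2 * ((b - a)\<^sup>2 + 1 + C\<^sup>2)) * energy"
    unfolding c_def by (simp add: algebra_simps power2_eq_square power3_eq_cube)
  finally show ?thesis .
qed

end

theorem mainTheorem6:
  fixes a b :: real and u u1 u2 :: "real \<Rightarrow> real^2"
  assumes "a < b"
    and "W2inf_with_derivs a b u u1 u2"
    and "\<forall>x\<in>{a..b}. (norm (u1 x))\<^sup>2 = 1"
  shows "\<exists>\<alpha>>0. \<forall>v v1 v2.
           H2_with_derivs a b v v1 v2 \<and>
           (\<forall>x\<in>{a..b}. u1 x \<bullet> v1 x = 0) \<and> v a = 0 \<and> v1 a = 0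
           \<longrightarrow> a_form a b (\<lambda>x. - (norm (u2 x))\<^sup>2) v1 v2 v1 v2 \<ge> \<alpha> * H2_norm_sq a b v v1 v2"
proof -
  interpret unit_speed_curve a b u u1 u2
    by (rule unit_speed_curve.intro) (fact assms)+
  obtain C where C: "AE x in lborel. x \<in> {a..b} \<longrightarrow> norm (u2 x) \<le> C"
    using W2inf unfolding W2inf_with_derivs_def by blast
  define K where "K = 1 + (b - a)\<^sup>2 * ((b - a)\<^sup>2 + 1 + C\<^sup>2)"
  have "K > 0"
    unfolding K_def by (intro add_pos_nonneg) auto
  show ?thesis
  proof (intro exI[of _ "1 / K"] conjI allI impI)
    fix v v1 v2
    assume "H2_with_derivs a b v v1 v2 \<and> (\<forall>x\<in>{a..b}. u1 x \<bullet> v1 x = 0) \<and> v a = 0 \<and> v1 a = 0"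
    then interpret admissible_variation a b u u1 u2 v v1 v2
      by unfold_locales auto
    show "a_form a b (\<lambda>x. - (norm (u2 x))\<^sup>2) v1 v2 v1 v2 \<ge> 1 / K * H2_norm_sq a b v v1 v2"
      using H2_norm_sq_le[OF C] \<open>K > 0\<close>
      unfolding a_form_eq_energy K_def[symmetric] by (simp add: field_simps mult.commute)
  qed (use \<open>K > 0\<close> in simp)
qed

end
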